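(* In the setting of the context, for every $i\in\{1,\dots,N\}$, $$C_i:=\sum_{j=1}^M\sum_{l\ne i}|U_{j,s_i}|\,|U_{j,s_l}|\le 2\sqrt{\eta\,kN^{\gamma+1}},$$ where $\eta=\max_\alpha\eta_\alpha$.
   Context: $M=kN^\gamma$ modes ($k>0$, $\gamma>1$, $M\ge N$) partitioned into $N$ disjoint sublattices $\mathcal L_1,\dots,\mathcal L_N$ of $M/N$ modes each, sublattice $\mathcal L_\alpha$ containing exactly one source mode $s_\alpha$. $U$ is an $M\times M$ unitary (of a linear-optical circuit, $\hat a_j\mapsto\sum_kU_{jk}\hat a_k$). The leakage rate of source $\alpha$ is $\eta_\alpha=\sum_{j\notin\mathcal L_\alpha}|U_{j,s_\alpha}|^2$. *)

theory Defs
  imports "HOL-Analysis.Analysis"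
begin

definition unitary_matrix :: "nat \<Rightarrow> (nat \<Rightarrow> nat \<Rightarrow> complex) \<Rightarrow> bool" where
  "unitary_matrix M U \<longleftrightarrow>
     (\<forall>a<M. \<forall>b<M. (\<Sum>j<M. cnj (U j a) * U j b) = (if a = b then 1 else 0)) \<and>
     (\<forall>a<M. \<forall>b<M. (\<Sum>j<M. U a j * cnj (U b j)) = (if a = b then 1 else 0))"

definition leakage :: "nat \<Rightarrow> (nat \<Rightarrow> nat \<Rightarrow> complex) \<Rightarrow> (nat \<Rightarrow> nat set) \<Rightarrow> (nat \<Rightarrow> nat) \<Rightarrow> nat \<Rightarrow> real" where
  "leakage M U L s \<alpha> = (\<Sum>j\<in>{..<M} - L \<alpha>. (cmod (U j (s \<alpha>)))\<^sup>2)"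

end

theory Submission
  imports Defs
begin

text \<open>Split the rows into the sublattice L i of source i and its complement. On L i the column
  of s i has weight at most 1 while the column of any other source s l has weight at most its
  leakage; off L i the roles are swapped. Cauchy-Schwarz on each part bounds the overlap of
  the two columns by 2 sqrt eta, and summing over the fewer than N other sources gives
  2 N sqrt eta, which is at most 2 sqrt (eta M N) = 2 sqrt (eta k N^(gamma+1)) since N \<le> M.\<close>

lemma sum_mult_le_sqrt_sum_squares:
  fixes f g :: "'a \<Rightarrow> real"
  assumes "\<And>j. j \<in> A \<Longrightarrow> f j \<ge> 0" "\<And>j. j \<in> A \<Longrightarrow> g j \<ge> 0"
  shows "(\<Sum>j\<in>A. f j * g j) \<le> sqrt (\<Sum>j\<in>A. (f j)\<^sup>2) * sqrt (\<Sum>j\<in>A. (g j)\<^sup>2)"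
proof -
  have "(\<Sum>j\<in>A. f j * g j) = (\<Sum>j\<in>A. \<bar>f j\<bar> * \<bar>g j\<bar>)"
    using assms by (intro sum.cong) auto
  also have "\<dots> \<le> L2_set f A * L2_set g A"
    by (rule L2_set_mult_ineq)
  finally show ?thesis
    unfolding L2_set_def by simp
qed

lemma sum_mult_le_two_sqrt_of_split:
  fixes a b :: "'a \<Rightarrow> real"
  assumes "finite A" "B \<subseteq> A"
    and nonneg: "\<And>j. j \<in> A \<Longrightarrow> a j \<ge> 0" "\<And>j. j \<in> A \<Longrightarrow> b j \<ge> 0"
    and a_norm: "(\<Sum>j\<in>A. (a j)\<^sup>2) \<le> 1" and b_norm: "(\<Sum>j\<in>A. (b j)\<^sup>2) \<le> 1"
    and a_outside: "(\<Sum>j\<in>A - B. (a j)\<^sup>2) \<le> \<eta>" and b_inside: "(\<Sum>j\<in>B. (b j)\<^sup>2) \<le> \<eta>"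
  shows "(\<Sum>j\<in>A. a j * b j) \<le> 2 * sqrt \<eta>"
proof -
  have sub_le: "(\<Sum>j\<in>C. (c j)\<^sup>2) \<le> (\<Sum>j\<in>A. (c j)\<^sup>2)" if "C \<subseteq> A" for C and c :: "'a \<Rightarrow> real"
    using \<open>finite A\<close> that by (intro sum_mono2) auto
  have "\<eta> \<ge> 0"
    using b_inside sum_nonneg[of B "\<lambda>j. (b j)\<^sup>2"] by simp
  have "(\<Sum>j\<in>A. a j * b j) = (\<Sum>j\<in>B. a j * b j) + (\<Sum>j\<in>A - B. a j * b j)"
    using assms(1,2) by (metis sum.subset_diff add.commute)
  also have "(\<Sum>j\<in>B. a j * b j) \<le> sqrt (\<Sum>j\<in>B. (a j)\<^sup>2) * sqrt (\<Sum>j\<in>B. (b j)\<^sup>2)"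
    using assms(2) nonneg by (intro sum_mult_le_sqrt_sum_squares) auto
  also have "\<dots> \<le> 1 * sqrt \<eta>"
    using sub_le[OF assms(2), of a] a_norm b_inside
    by (intro mult_mono) (auto intro: sum_nonneg)
  also have "(\<Sum>j\<in>A - B. a j * b j) \<le> sqrt (\<Sum>j\<in>A - B. (a j)\<^sup>2) * sqrt (\<Sum>j\<in>A - B. (b j)\<^sup>2)"
    using nonneg by (intro sum_mult_le_sqrt_sum_squares) auto
  also have "\<dots> \<le> sqrt \<eta> * 1"
    using sub_le[of "A - B" b] a_outside b_norm \<open>\<eta> \<ge> 0\<close>
    by (intro mult_mono) (auto intro: sum_nonneg)
  finally show ?thesis
    by simp
qed

lemma unitary_matrix_column_norm:
  assumes "unitary_matrix M U" "a < M"
  shows "(\<Sum>j<M. (cmod (U j a))\<^sup>2) = 1"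
proof -
  have "cnj (U j a) * U j a = of_real ((cmod (U j a))\<^sup>2)" for j
    using complex_norm_square[of "U j a"] by (simp add: mult.commute)
  moreover have "(\<Sum>j<M. cnj (U j a) * U j a) = 1"
    using assms unfolding unitary_matrix_def by auto
  ultimately have "of_real (\<Sum>j<M. (cmod (U j a))\<^sup>2) = (1::complex)"
    by simp
  then show ?thesis
    using of_real_eq_1_iff by blast
qed

lemma column_weight_outside_le_leakage:
  assumes "A \<subseteq> {..<M} - L \<alpha>"
  shows "(\<Sum>j\<in>A. (cmod (U j (s \<alpha>)))\<^sup>2) \<le> leakage M U L s \<alpha>"
  unfolding leakage_def using assms by (intro sum_mono2) auto

lemma leakage_nonneg: "leakage M U L s \<alpha> \<ge> 0"
  unfolding leakage_def by (intro sum_nonneg) auto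

lemma square_le_mult_powr:
  fixes k \<gamma> :: real
  assumes "real M = k * real N powr \<gamma>" "N \<le> M" "N > 0"
  shows "real N * real N \<le> k * real N powr (\<gamma> + 1)"
proof -
  have "k * real N powr (\<gamma> + 1) = real M * real N"
    using assms by (simp add: powr_add)
  then show ?thesis
    using assms(2) by (simp add: mult_right_mono)
qed

theorem lemma4:
  fixes M N :: nat and k \<gamma> :: real
    and U :: "nat \<Rightarrow> nat \<Rightarrow> complex"
    and L :: "nat \<Rightarrow> nat set" and s :: "nat \<Rightarrow> nat"
  assumes k_pos: "k > 0" and gamma: "\<gamma> > 1"
    and M_def: "real M = k * real N powr \<gamma>"
    and MN: "M \<ge> N"
    and L_sub: "\<forall>\<alpha><N. L \<alpha> \<subseteq> {..<M}"
    and L_cover: "(\<Union>\<alpha><N. L \<alpha>) = {..<M}"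
    and L_disj: "\<forall>\<alpha><N. \<forall>\<beta><N. \<alpha> \<noteq> \<beta> \<longrightarrow> L \<alpha> \<inter> L \<beta> = {}"
    and L_card: "\<forall>\<alpha><N. real (card (L \<alpha>)) = real M / real N"
    and src: "\<forall>\<alpha><N. s \<alpha> \<in> L \<alpha>"
    and U_unitary: "unitary_matrix M U"
    and i: "i < N"
  shows "(\<Sum>j<M. \<Sum>l\<in>{..<N} - {i}. cmod (U j (s i)) * cmod (U j (s l)))
           \<le> 2 * sqrt (Max ((\<lambda>\<alpha>. leakage M U L s \<alpha>) ` {..<N}) * k * real N powr (\<gamma> + 1))"
proof -
  define \<eta> where "\<eta> = Max ((\<lambda>\<alpha>. leakage M U L s \<alpha>) ` {..<N})"
  have leakage_le: "leakage M U L s \<alpha> \<le> \<eta>" if "\<alpha> < N" for \<alpha>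
    unfolding \<eta>_def using that by (intro Max_ge) auto
  have source_lt: "s \<alpha> < M" if "\<alpha> < N" for \<alpha>
    using L_sub src that by blast
  have "\<eta> \<ge> 0"
    using leakage_le[OF i] leakage_nonneg[of M U L s i] by linarith
  have overlap: "(\<Sum>j<M. cmod (U j (s i)) * cmod (U j (s l))) \<le> 2 * sqrt \<eta>"
    if l: "l < N" "l \<noteq> i" for l
  proof (rule sum_mult_le_two_sqrt_of_split[where B = "L i"])
    have "L i \<subseteq> {..<M} - L l"
      using L_sub L_disj i l by blast
    then show "(\<Sum>j\<in>L i. (cmod (U j (s l)))\<^sup>2) \<le> \<eta>"
      using column_weight_outside_le_leakage leakage_le[OF l(1)] order_trans by blast
    show "(\<Sum>j\<in>{..<M} - L i. (cmod (U j (s i)))\<^sup>2) \<le> \<eta>"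
      using column_weight_outside_le_leakage leakage_le[OF i] order_trans by blast
  qed (use L_sub i l source_lt unitary_matrix_column_norm[OF U_unitary] in auto)
  have "(\<Sum>j<M. \<Sum>l\<in>{..<N} - {i}. cmod (U j (s i)) * cmod (U j (s l)))
      = (\<Sum>l\<in>{..<N} - {i}. \<Sum>j<M. cmod (U j (s i)) * cmod (U j (s l)))"
    by (rule sum.swap)
  also have "\<dots> \<le> real (N - 1) * (2 * sqrt \<eta>)"
    using sum_mono[of "{..<N} - {i}" _ "\<lambda>_. 2 * sqrt \<eta>"] overlap i by auto
  also have "\<dots> \<le> real N * (2 * sqrt \<eta>)"
    using \<open>\<eta> \<ge> 0\<close> by (intro mult_right_mono) auto
  also have "\<dots> = 2 * sqrt (\<eta> * (real N * real N))"
    by (simp add: real_sqrt_mult)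
  also have "\<dots> \<le> 2 * sqrt (\<eta> * (k * real N powr (\<gamma> + 1)))"
    using square_le_mult_powr[OF M_def MN] i \<open>\<eta> \<ge> 0\<close> by (simp add: mult_left_mono)
  finally show ?thesis
    unfolding \<eta>_def by (simp add: mult.assoc)
qed

end
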